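(* For every graph $G$ on $n$ vertices, $G$ can be turned into a word-representable graph on the same vertex set by adding or deleting at most $\min\{|E(G)|/3,\ \binom n2-|E(G)|\}$ edges; that is, $\binom n2\,\mathrm{dist}(G,\mathcal H_{\rm word})\le\min\{|E(G)|/3,\binom n2-|E(G)|\}$. In particular $\mathrm{dist}(G,\mathcal H_{\rm word})\le 1/4$.
   Context: A word over alphabet $V$ represents a graph $G=(V,E)$ if for all distinct $x,y\in V$: $xy\in E$ iff the occurrences of $x$ and $y$ alternate in the word; $\mathcal H_{\rm word}$ is the class of graphs admitting such a word. For graphs $G,H$ on the same $n$-vertex set, $\mathrm{dist}(G,H)=|E(G)\triangle E(H)|/\binom n2$ and $\mathrm{dist}(G,\mathcal H)=\min\{\mathrm{dist}(G,H):H\in\mathcal H, V(H)=V(G)\}$. *)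

theory Defs
  imports Complex_Main
begin

definition simple_graph :: "'a set \<Rightarrow> 'a set set \<Rightarrow> bool" where
  "simple_graph V E \<longleftrightarrow> finite V \<and> (\<forall>e\<in>E. e \<subseteq> V \<and> card e = 2)"

definition alternate :: "'a list \<Rightarrow> 'a \<Rightarrow> 'a \<Rightarrow> bool" where
  "alternate w x y \<longleftrightarrow>
     (let u = filter (\<lambda>z. z = x \<or> z = y) w in
      \<forall>i. Suc i < length u \<longrightarrow> u ! i \<noteq> u ! Suc i)"

definition represents :: "'a list \<Rightarrow> 'a set \<Rightarrow> 'a set set \<Rightarrow> bool" where
  "represents w V E \<longleftrightarrow> set w = V \<and>
     (\<forall>x\<in>V. \<forall>y\<in>V. x \<noteq> y \<longrightarrow> ({x, y} \<in> E \<longleftrightarrow> alternate w x y))"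

definition word_representable :: "'a set \<Rightarrow> 'a set set \<Rightarrow> bool" where
  "word_representable V E \<longleftrightarrow> simple_graph V E \<and> (\<exists>w. represents w V E)"

definition graph_dist :: "'a set \<Rightarrow> 'a set set \<Rightarrow> 'a set set \<Rightarrow> real" where
  "graph_dist V E F = real (card ((E - F) \<union> (F - E))) / real (card V choose 2)"

definition dist_word :: "'a set \<Rightarrow> 'a set set \<Rightarrow> real" where
  "dist_word V E = Min {graph_dist V E F | F. word_representable V F}"

end

theory Submission
  imports Defs
begin

(* A uniformly random 3-coloring makes each edge monochromatic with probability 1/3, so some
  3-coloring has at most |E|/3 monochromatic edges; greedily coloring one vertex at a time with
  the color creating the fewest new monochromatic edges finds one. Deleting these edges leaves a
  properly 3-colored graph, and such graphs are word-representable. Adding instead all missing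
  edges gives the complete graph, represented by any permutation. Finally min (m/3) (N - m) <= N/4. *)

definition monochromatic :: "('a \<Rightarrow> nat) \<Rightarrow> 'a set \<Rightarrow> bool" where
  "monochromatic col e \<longleftrightarrow> (\<forall>x\<in>e. \<forall>y\<in>e. col x = col y)"

lemma monochromatic_doubleton [simp]: "monochromatic col {x, y} \<longleftrightarrow> col x = col y"
  by (auto simp: monochromatic_def)

lemma ex_le_average:
  assumes "0 < k"
  shows "\<exists>c<k. k * f c \<le> (\<Sum>i<k. f i :: nat)"
proof -
  have "f ` {..<k} \<noteq> {}" using assms by auto
  then obtain c where "c < k" "f c = Min (f ` {..<k})"
    using Min_in[of "f ` {..<k}"] by fastforce
  with card_Min_le_sum[of "{..<k}" f] show ?thesis by auto
qed

lemma ex_color_vertex_few_monochromatic: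
  assumes "finite E" "0 < k" "\<forall>z. col z < k" and star: "\<forall>e\<in>E. \<exists>u. u \<noteq> v \<and> e = {v, u}"
  shows "\<exists>c<k. k * card {e\<in>E. monochromatic (col(v := c)) e} \<le> card E"
proof -
  define N where "N c = {e\<in>E. monochromatic (col(v := c)) e}" for c
  have mono_iff: "monochromatic (col(v := c)) {v, u} \<longleftrightarrow> c = col u" if "u \<noteq> v" for u c
    using that by simp
  have "E = (\<Union>c<k. N c)"
    using star assms(3) mono_iff by (fastforce simp: N_def)
  moreover have "card (\<Union>c<k. N c) = (\<Sum>c<k. card (N c))"
  proof (rule card_UN_disjoint)
    show "\<forall>i\<in>{..<k}. \<forall>j\<in>{..<k}. i \<noteq> j \<longrightarrow> N i \<inter> N j = {}"
      using star mono_iff by (fastforce simp: N_def)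
  qed (use \<open>finite E\<close> in \<open>auto simp: N_def\<close>)
  ultimately have "card E = (\<Sum>c<k. card (N c))"
    by simp
  with ex_le_average[OF \<open>0 < k\<close>, of "\<lambda>c. card (N c)"] show ?thesis
    by (simp add: N_def)
qed

lemma ex_coloring_few_monochromatic:
  assumes "simple_graph V E" "0 < k"
  shows "\<exists>col. (\<forall>z. col z < k) \<and> k * card {e\<in>E. monochromatic col e} \<le> card E"
proof -
  have "finite V" "\<forall>e\<in>E. e \<subseteq> V \<and> card e = 2"
    using assms(1) by (auto simp: simple_graph_def)
  then show ?thesis
  proof (induction V arbitrary: E rule: finite_induct)
    case empty
    then have "E = {}" by fastforce
    then show ?case by (intro exI[of _ "\<lambda>_. 0"]) (simp add: \<open>0 < k\<close>)
  next
    case (insert v V)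
    define E1 where "E1 = {e\<in>E. v \<notin> e}"
    define E2 where "E2 = {e\<in>E. v \<in> e}"
    have "finite E"
      using insert.hyps(1) insert.prems by (auto intro: finite_subset[of E "Pow (insert v V)"])
    have "\<forall>e\<in>E1. e \<subseteq> V \<and> card e = 2"
      using insert.prems by (auto simp: E1_def)
    then obtain col0 where col0: "\<forall>z. col0 z < k" "k * card {e\<in>E1. monochromatic col0 e} \<le> card E1"
      using insert.IH by blast
    have "\<forall>e\<in>E2. \<exists>u. u \<noteq> v \<and> e = {v, u}"
      using insert.prems by (fastforce simp: E2_def card_2_iff)
    then obtain c where c: "c < k" "k * card {e\<in>E2. monochromatic (col0(v := c)) e} \<le> card E2"
      using ex_color_vertex_few_monochromatic[of E2 k col0 v] \<open>finite E\<close> \<open>0 < k\<close> col0(1)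
      by (auto simp: E2_def)
    have "monochromatic (col0(v := c)) e \<longleftrightarrow> monochromatic col0 e" if "v \<notin> e" for e
      using that by (auto simp: monochromatic_def)
    then have "{e\<in>E. monochromatic (col0(v := c)) e}
        = {e\<in>E1. monochromatic col0 e} \<union> {e\<in>E2. monochromatic (col0(v := c)) e}"
      by (auto simp: E1_def E2_def)
    then have "card {e\<in>E. monochromatic (col0(v := c)) e}
        = card {e\<in>E1. monochromatic col0 e} + card {e\<in>E2. monochromatic (col0(v := c)) e}"
      using \<open>finite E\<close> by (simp add: card_Un_disjoint E1_def E2_def disjoint_iff)
    moreover have "card E = card E1 + card E2"
    proof -
      have "E = E1 \<union> E2" "E1 \<inter> E2 = {}" by (auto simp: E1_def E2_def)
      then show ?thesis using \<open>finite E\<close> by (simp add: card_Un_disjoint)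
    qed
    ultimately have "k * card {e\<in>E. monochromatic (col0(v := c)) e} \<le> card E"
      using col0(2) c(2) by (simp add: add_mult_distrib2)
    moreover have "\<forall>z. (col0(v := c)) z < k"
      using col0(1) c(1) by simp
    ultimately show ?case by blast
  qed
qed

definition pair_proj :: "'a \<Rightarrow> 'a \<Rightarrow> 'a list \<Rightarrow> 'a list" where
  "pair_proj x y w = filter (\<lambda>z. z = x \<or> z = y) w"

lemma alternate_iff_distinct_adj: "alternate w x y \<longleftrightarrow> distinct_adj (pair_proj x y w)"
  by (simp add: alternate_def pair_proj_def distinct_adj_conv_nth Let_def)

lemma pair_proj_commute: "pair_proj x y w = pair_proj y x w"
  unfolding pair_proj_def by meson

lemma pair_proj_Nil [simp]: "pair_proj x y [] = []"
  and pair_proj_Cons [simp]: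
    "pair_proj x y (z # w) = (if z = x \<or> z = y then z # pair_proj x y w else pair_proj x y w)"
  and pair_proj_append [simp]: "pair_proj x y (w @ w') = pair_proj x y w @ pair_proj x y w'"
  and pair_proj_filter: "pair_proj x y (filter P w) = filter P (pair_proj x y w)"
  and pair_proj_rev: "pair_proj x y (rev w) = rev (pair_proj x y w)"
  and pair_proj_sort_key: "pair_proj x y (sort_key f w) = sort_key f (pair_proj x y w)"
  by (simp_all add: pair_proj_def filter_filter conj_commute rev_filter filter_sort)

lemma pair_proj_concat: "pair_proj x y (concat ws) = concat (map (pair_proj x y) ws)"
  by (induction ws) auto

lemma pair_proj_distinct:
  assumes "distinct w" "x \<in> set w" "y \<in> set w" "x \<noteq> y"
  shows "pair_proj x y w = [x, y] \<or> pair_proj x y w = [y, x]"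
proof -
  have "distinct (pair_proj x y w)" "set (pair_proj x y w) = {x, y}"
    using assms by (auto simp: pair_proj_def)
  moreover from this have "length (pair_proj x y w) = 2"
    using distinct_card \<open>x \<noteq> y\<close> by fastforce
  then obtain a b where "pair_proj x y w = [a, b]"
    by (auto simp: length_Suc_conv numeral_2_eq_2)
  ultimately show ?thesis
    by (auto simp: doubleton_eq_iff)
qed

lemma pair_proj_sort_key_less:
  assumes "distinct w" "x \<in> set w" "y \<in> set w" "f x < f y"
  shows "pair_proj x y (sort_key f w) = [x, y]"
proof -
  have "x \<noteq> y" using assms(4) by auto
  with pair_proj_distinct[OF assms(1-3)] assms(4) show ?thesis
    by (auto simp: pair_proj_sort_key)
qed

lemma not_distinct_adj_pair_proj_sort_key_rev:
  assumes "distinct w" "x \<in> set w" "y \<in> set w" "x \<noteq> y" "f x = f y"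
  shows "\<not> distinct_adj (pair_proj x y (sort_key f w @ sort_key f (rev w)))"
  using pair_proj_distinct[OF assms(1-4)] assms(4,5)
  by (auto simp: pair_proj_sort_key pair_proj_rev)

lemma distinct_adj_concat_replicate:
  "x \<noteq> y \<Longrightarrow> distinct_adj (concat (replicate n [x, y, x, y]))"
proof (induction n)
  case (Suc n)
  then show ?case by (cases n) (auto simp: distinct_adj_Cons)
qed simp

(* The second branch is meant only for col x = 0 and col y = 2 among three colors: there the
  first one fails, since x would have to follow and y precede every vertex of color 1. *)
definition gadget :: "('a \<Rightarrow> nat) \<Rightarrow> 'a list \<Rightarrow> 'a \<Rightarrow> 'a \<Rightarrow> 'a list" where
  "gadget col P x y =
     (if col y = Suc (col x)
      then P @ filter (\<lambda>z. col z < col y \<and> z \<noteq> x) P @ [y, x]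
        @ filter (\<lambda>z. col y \<le> col z \<and> z \<noteq> y) P
      else filter (\<lambda>z. z \<noteq> y) P @ [x, y] @ filter (\<lambda>z. z \<noteq> x) P)"

lemma set_gadget: "set (gadget col P x y) \<subseteq> set P \<union> {x, y}"
  by (auto simp: gadget_def)

lemma gadget_breaks_pair:
  assumes "pair_proj x y P = [x, y]" "col x < col y"
  shows "\<not> distinct_adj (pair_proj x y (gadget col P x y))"
  using assms by (auto simp: gadget_def pair_proj_filter)

lemma gadget_keeps_pair:
  assumes "pair_proj u v P = [u, v]" "col u < col v" "col v < 3" "col x < col y" "col y < 3"
    and "{u, v} \<noteq> {x, y}"
  shows "pair_proj u v (gadget col P x y) = [u, v, u, v]"
  using assms by (auto simp: gadget_def pair_proj_filter doubleton_eq_iff)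

(* The reversed copy makes pairs of equal color project to p r r p. *)
definition coloring_word :: "('a \<Rightarrow> nat) \<Rightarrow> 'a set set \<Rightarrow> 'a list \<Rightarrow> 'a list" where
  "coloring_word col E xs =
     sort_key col xs @ sort_key col (rev xs) @
     concat (map (\<lambda>(x, y). gadget col (sort_key col xs) x y)
       (filter (\<lambda>(x, y). col x < col y \<and> {x, y} \<notin> E) (List.product xs xs)))"

lemma set_coloring_word: "set (coloring_word col E xs) = set xs"
  using set_gadget by (fastforce simp: coloring_word_def)

lemma coloring_word_edge:
  assumes "distinct xs" "x \<in> set xs" "y \<in> set xs" "\<forall>z\<in>set xs. col z < 3"
    and "col x < col y" "{x, y} \<in> E"
  shows "distinct_adj (pair_proj x y (coloring_word col E xs))"
proof -
  define P where "P = sort_key col xs"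
  define ps where "ps = filter (\<lambda>(x, y). col x < col y \<and> {x, y} \<notin> E) (List.product xs xs)"
  have P: "pair_proj x y P = [x, y]" "pair_proj x y (sort_key col (rev xs)) = [x, y]"
    using assms by (auto simp: P_def pair_proj_sort_key_less)
  have "(pair_proj x y \<circ> (\<lambda>(a, b). gadget col P a b)) p = [x, y, x, y]" if "p \<in> set ps" for p
  proof -
    obtain a b where "p = (a, b)"
      by fastforce
    with that assms show ?thesis
      by (auto simp: ps_def intro!: gadget_keeps_pair[OF P(1)])
  qed
  then have "map (pair_proj x y \<circ> (\<lambda>(a, b). gadget col P a b)) ps = map (\<lambda>_. [x, y, x, y]) ps"
    by (rule map_cong[OF refl])
  then have "pair_proj x y (coloring_word col E xs) = concat (replicate (Suc (length ps)) [x, y, x, y])"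
    unfolding coloring_word_def P_def[symmetric] ps_def[symmetric]
    by (simp add: P pair_proj_concat map_replicate_const)
  moreover have "x \<noteq> y"
    using \<open>col x < col y\<close> by auto
  ultimately show ?thesis
    by (metis distinct_adj_concat_replicate)
qed

lemma coloring_word_non_edge:
  assumes "distinct xs" "x \<in> set xs" "y \<in> set xs" "col x < col y" "{x, y} \<notin> E"
  shows "\<not> distinct_adj (pair_proj x y (coloring_word col E xs))"
proof -
  define g where "g = (\<lambda>(a, b). gadget col (sort_key col xs) a b)"
  obtain ps1 ps2 where
    "filter (\<lambda>(x, y). col x < col y \<and> {x, y} \<notin> E) (List.product xs xs) = ps1 @ (x, y) # ps2"
    using assms split_list[of "(x, y)"] by fastforce
  then have "pair_proj x y (coloring_word col E xs)
      = pair_proj x y (sort_key col xs @ sort_key col (rev xs) @ concat (map g ps1))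
        @ pair_proj x y (g (x, y)) @ pair_proj x y (concat (map g ps2))"
    by (simp add: coloring_word_def g_def)
  moreover have "\<not> distinct_adj (pair_proj x y (g (x, y)))"
    using assms unfolding g_def by (simp add: gadget_breaks_pair pair_proj_sort_key_less)
  ultimately show ?thesis
    by auto
qed

lemma coloring_word_same_color:
  assumes "distinct xs" "x \<in> set xs" "y \<in> set xs" "x \<noteq> y" "col x = col y"
  shows "\<not> distinct_adj (pair_proj x y (coloring_word col E xs))"
  using not_distinct_adj_pair_proj_sort_key_rev[OF assms]
  unfolding coloring_word_def append_assoc[symmetric]
  by (subst pair_proj_append) (blast dest: distinct_adj_appendD1)

lemma three_colorable_word_representable:
  assumes "simple_graph V E" "\<forall>z\<in>V. col z < 3" "\<forall>e\<in>E. \<not> monochromatic col e"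
  shows "word_representable V E"
proof -
  have "finite V"
    using assms(1) by (simp add: simple_graph_def)
  then obtain xs where xs: "set xs = V" "distinct xs"
    using finite_distinct_list by blast
  have adjacent_iff: "{x, y} \<in> E \<longleftrightarrow> distinct_adj (pair_proj x y (coloring_word col E xs))"
    if "x \<in> V" "y \<in> V" "x \<noteq> y" "col x \<le> col y" for x y
  proof (cases "col x = col y")
    case True
    then show ?thesis
      using that assms(3) xs coloring_word_same_color by fastforce
  next
    case False
    then show ?thesis
      using that assms(2) xs coloring_word_edge coloring_word_non_edge
      by (metis order_le_neq_trans)
  qed
  have "represents (coloring_word col E xs) V E"
    unfolding represents_def alternate_iff_distinct_adj
  proof (intro conjI ballI impI)
    show "set (coloring_word col E xs) = V"
      by (simp add: set_coloring_word xs(1))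
    fix x y assume "x \<in> V" "y \<in> V" "x \<noteq> y"
    then show "{x, y} \<in> E \<longleftrightarrow> distinct_adj (pair_proj x y (coloring_word col E xs))"
      using adjacent_iff[of x y] adjacent_iff[of y x]
      by (cases "col x \<le> col y") (auto simp: insert_commute pair_proj_commute)
  qed
  with assms(1) show ?thesis
    by (auto simp: word_representable_def)
qed

lemma complete_graph_word_representable:
  assumes "finite V"
  shows "word_representable V {e. e \<subseteq> V \<and> card e = 2}"
proof -
  obtain xs where xs: "set xs = V" "distinct xs"
    using assms finite_distinct_list by blast
  have "represents xs V {e. e \<subseteq> V \<and> card e = 2}"
    unfolding represents_def alternate_iff_distinct_adj
  proof (intro conjI ballI impI)
    fix x y assume "x \<in> V" "y \<in> V" "x \<noteq> y"
    then have "pair_proj x y xs = [x, y] \<or> pair_proj x y xs = [y, x]"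
      using xs by (intro pair_proj_distinct) auto
    with \<open>x \<in> V\<close> \<open>y \<in> V\<close> \<open>x \<noteq> y\<close>
    show "{x, y} \<in> {e. e \<subseteq> V \<and> card e = 2} \<longleftrightarrow> distinct_adj (pair_proj x y xs)"
      by auto
  qed fact
  with assms show ?thesis
    by (auto simp: word_representable_def simple_graph_def)
qed

lemma ex_word_representable_subgraph_third:
  assumes "simple_graph V E"
  shows "\<exists>F\<subseteq>E. word_representable V F \<and> 3 * card (E - F) \<le> card E"
proof -
  obtain col where col: "\<forall>z. col z < (3::nat)" "3 * card {e\<in>E. monochromatic col e} \<le> card E"
    using ex_coloring_few_monochromatic[OF assms, of 3] by auto
  define F where "F = {e\<in>E. \<not> monochromatic col e}"
  have "word_representable V F"
    using assms col(1)
    by (intro three_colorable_word_representable) (auto simp: F_def simple_graph_def)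
  moreover have "E - F = {e\<in>E. monochromatic col e}"
    by (auto simp: F_def)
  moreover have "F \<subseteq> E"
    by (auto simp: F_def)
  ultimately show ?thesis
    using col(2) by metis
qed

lemma ex_word_representable_close:
  assumes "simple_graph V E"
  shows "\<exists>F. word_representable V F \<and> real (card ((E - F) \<union> (F - E)))
           \<le> min (real (card E) / 3) (real (card V choose 2) - real (card E))"
proof -
  define K where "K = {e. e \<subseteq> V \<and> card e = 2}"
  have "finite V" "E \<subseteq> K"
    using assms by (auto simp: simple_graph_def K_def)
  have "finite K" "card K = card V choose 2"
    using \<open>finite V\<close> n_subsets[of V 2] by (auto simp: K_def intro: finite_subset[of _ "Pow V"])
  obtain F where F: "F \<subseteq> E" "word_representable V F" "3 * card (E - F) \<le> card E"
    using ex_word_representable_subgraph_third[OF assms] by blast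
  have "(E - F) \<union> (F - E) = E - F"
    using \<open>F \<subseteq> E\<close> by auto
  with F(3) have close_F: "real (card ((E - F) \<union> (F - E))) \<le> real (card E) / 3"
    by simp
  have "(E - K) \<union> (K - E) = K - E"
    using \<open>E \<subseteq> K\<close> by auto
  then have close_K: "real (card ((E - K) \<union> (K - E))) = real (card V choose 2) - real (card E)"
    using \<open>finite K\<close> \<open>E \<subseteq> K\<close> \<open>card K = card V choose 2\<close> card_mono[of K E]
    by (simp add: card_Diff_subset finite_subset of_nat_diff)
  show ?thesis
  proof (cases "real (card E) / 3 \<le> real (card V choose 2) - real (card E)")
    case True
    with F(2) close_F show ?thesis by auto
  next
    case False
    with complete_graph_word_representable[OF \<open>finite V\<close>] close_K show ?thesis
      by (auto simp: K_def)
  qed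
qed

lemma dist_word_le_graph_dist:
  assumes "finite V" "word_representable V F"
  shows "dist_word V E \<le> graph_dist V E F"
proof -
  have "{graph_dist V E F | F. word_representable V F} \<subseteq> graph_dist V E ` Pow (Pow V)"
    by (auto simp: word_representable_def simple_graph_def)
  then have "finite {graph_dist V E F | F. word_representable V F}"
    using \<open>finite V\<close> by (meson finite_Pow_iff finite_imageI finite_subset)
  with assms(2) show ?thesis
    unfolding dist_word_def by (auto intro: Min_le)
qed

theorem mainTheorem4:
  fixes V :: "'a set" and E :: "'a set set"
  assumes "simple_graph V E"
  shows "(\<exists>F. word_representable V F \<and>
            real (card ((E - F) \<union> (F - E)))
              \<le> min (real (card E) / 3) (real (card V choose 2) - real (card E)))
       \<and> real (card V choose 2) * dist_word V E
           \<le> min (real (card E) / 3) (real (card V choose 2) - real (card E))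
       \<and> dist_word V E \<le> 1 / 4"
proof -
  let ?N = "real (card V choose 2)"
  let ?M = "min (real (card E) / 3) (?N - real (card E))"
  obtain F where F: "word_representable V F" "real (card ((E - F) \<union> (F - E))) \<le> ?M"
    using ex_word_representable_close[OF assms] by blast
  have dist_F: "dist_word V E \<le> real (card ((E - F) \<union> (F - E))) / ?N"
    using assms F(1) dist_word_le_graph_dist by (auto simp: simple_graph_def graph_dist_def)
  have "?N * dist_word V E \<le> ?N * (real (card ((E - F) \<union> (F - E))) / ?N)"
    using dist_F by (intro mult_left_mono) auto
  also have "\<dots> \<le> real (card ((E - F) \<union> (F - E)))"
    by (cases "?N = 0") auto
  also have "\<dots> \<le> ?M"
    by (fact F(2))
  finally have "?N * dist_word V E \<le> ?M" .
  have "?M \<le> ?N / 4"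
    by (simp add: min_def)
  have "dist_word V E \<le> real (card ((E - F) \<union> (F - E))) / ?N"
    by (fact dist_F)
  also have "\<dots> \<le> (?N / 4) / ?N"
    using F(2) \<open>?M \<le> ?N / 4\<close> by (intro divide_right_mono) auto
  also have "\<dots> \<le> 1 / 4"
    by (cases "?N = 0") auto
  finally show ?thesis
    using F \<open>?N * dist_word V E \<le> ?M\<close> by blast
qed

end
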